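(* Let $(\mathcal{X},c)$ be a metric space with diameter at most $1$, and let $p\ge 1$ and $k\ge 0$. Then $\mathrm{RPW}_{p,k}(\cdot,\cdot)$ is a metric on the set of Borel probability distributions on $\mathcal{X}$. That is, for all probability distributions $\mu,\nu,\kappa$ on $\mathcal{X}$: (i) $\mathrm{RPW}_{p,k}(\mu,\mu)=0$; (ii) $\mathrm{RPW}_{p,k}(\mu,\nu)>0$ whenever $\mu\neq\nu$; (iii) $\mathrm{RPW}_{p,k}(\mu,\nu)=\mathrm{RPW}_{p,k}(\nu,\mu)$; (iv) $\mathrm{RPW}_{p,k}(\mu,\nu)\le \mathrm{RPW}_{p,k}(\mu,\kappa)+\mathrm{RPW}_{p,k}(\kappa,\nu)$.
   Context: $(\mathcal{X},c)$ is a (compact) metric space with $c(x,y)\le 1$ for all $x,y\in\mathcal{X}$; distributions are Borel probability measures on $\mathcal{X}$. For $p\in[1,\infty)$, $\alpha\in[0,1]$ and probability distributions $\mu,\nu$, a partial transport plan of mass $\alpha$ is a nonnegative Borel measure $\gamma$ on $\mathcal{X}\times\mathcal{X}$ of total mass $\alpha$ whose first marginal is dominated by $\mu$ and whose second marginal is dominated by $\nu$ (setwise). Its cost is $w_p(\gamma)=\left(\int c(x,y)^p\,d\gamma(x,y)\right)^{1/p}$. The $\alpha$-partial $p$-Wasserstein distance is $W_{p,\alpha}(\mu,\nu)=\inf w_p(\gamma)$ over all partial transport plans of mass $\alpha$; for $\alpha=1$ this is the $p$-Wasserstein distance $W_p(\mu,\nu)$. For $k\ge 0$, the $(p,k)$-RPW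 distance is $\mathrm{RPW}_{p,k}(\mu,\nu)=\inf\{\varepsilon\in[0,1] : W_{p,1-\varepsilon}(\mu,\nu)\le k\varepsilon\}$. *)

theory Defs
  imports "HOL-Probability.Probability"
begin

definition prob_dist :: "'a::metric_space measure \<Rightarrow> bool" where
  "prob_dist \<mu> \<longleftrightarrow> prob_space \<mu> \<and> sets \<mu> = sets (borel :: 'a measure)"

definition partial_plan ::
  "'a::metric_space measure \<Rightarrow> 'a measure \<Rightarrow> real \<Rightarrow> ('a \<times> 'a) measure \<Rightarrow> bool" where
  "partial_plan \<mu> \<nu> \<alpha> \<gamma> \<longleftrightarrow>
     sets \<gamma> = sets (borel :: ('a \<times> 'a) measure) \<and>
     emeasure \<gamma> (space \<gamma>) = ennreal \<alpha> \<and>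
     (\<forall>A \<in> sets (borel :: 'a measure). emeasure \<gamma> (A \<times> UNIV) \<le> emeasure \<mu> A) \<and>
     (\<forall>B \<in> sets (borel :: 'a measure). emeasure \<gamma> (UNIV \<times> B) \<le> emeasure \<nu> B)"

definition wcost :: "real \<Rightarrow> ('a::metric_space \<times> 'a) measure \<Rightarrow> real" where
  "wcost p \<gamma> = (enn2real (\<integral>\<^sup>+ z. ennreal (dist (fst z) (snd z) powr p) \<partial>\<gamma>)) powr (1 / p)"

definition partial_W :: "real \<Rightarrow> real \<Rightarrow> 'a::metric_space measure \<Rightarrow> 'a measure \<Rightarrow> real" where
  "partial_W p \<alpha> \<mu> \<nu> = Inf {wcost p \<gamma> | \<gamma>. partial_plan \<mu> \<nu> \<alpha> \<gamma>}"

definition RPW :: "real \<Rightarrow> real \<Rightarrow> 'a::metric_space measure \<Rightarrow> 'a measure \<Rightarrow> real" where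
  "RPW p k \<mu> \<nu> = Inf {\<epsilon> \<in> {0..1}. partial_W p (1 - \<epsilon>) \<mu> \<nu> \<le> k * \<epsilon>}"

end

theory Submission
  imports Defs
begin

text \<open>Reflexivity and symmetry are immediate: the diagonal coupling costs nothing, and swapping
  coordinates preserves partial plans and their cost. The triangle inequality rests on
  \<open>partial_W p \<alpha> \<mu> \<nu> \<le> partial_W p \<alpha>\<^sub>1 \<mu> \<kappa> + partial_W p \<alpha>\<^sub>2 \<kappa> \<nu>\<close> for \<open>\<alpha> \<le> \<alpha>\<^sub>1 + \<alpha>\<^sub>2 - 1\<close>.
  To glue a plan from \<open>\<mu>\<close> to \<open>\<kappa>\<close> with one from \<open>\<kappa>\<close> to \<open>\<nu>\<close>, partition the compact space into
  finitely many Borel cells of small diameter and, within each cell, couple the mass the first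
  plan brings in with the mass the second plan takes out. Both are bounded by the \<open>\<kappa>\<close>-mass of the cell, so at least \<open>\<alpha>\<^sub>1 + \<alpha>\<^sub>2 - 1\<close> is glued,
  and Minkowski's inequality bounds the cost up to the cell diameter. Hence \<open>\<epsilon>\<^sub>1 + \<epsilon>\<^sub>2\<close> is
  admissible for \<open>(\<mu>, \<nu>)\<close> whenever \<open>\<epsilon>\<^sub>1\<close> is for \<open>(\<mu>, \<kappa>)\<close> and \<open>\<epsilon>\<^sub>2\<close> for \<open>(\<kappa>, \<nu>)\<close>.

  If \<open>RPW p k \<mu> \<nu> = 0\<close>, there are plans of mass close to 1 and cost close to 0; by Markov's inequality
  they give \<open>\<mu> F \<le> \<nu> {x. infdist x F < r}\<close> for closed \<open>F\<close> and \<open>r > 0\<close>, hence \<open>\<mu> F \<le> \<nu> F\<close>; by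
  symmetry \<open>\<mu>\<close> and \<open>\<nu>\<close> agree on the closed sets, which generate the Borel sets.

  Compactness is used twice: a compact metric space has a countable base, so the Borel sets of
  the square are the product \<open>\<sigma>\<close>-algebra, and it admits finite partitions into small cells.\<close>

section \<open>Borel sets of a compact metric space\<close>

lemma fst_borel_measurable [measurable]:
  "fst \<in> borel_measurable (borel :: ('a::topological_space \<times> 'b::topological_space) measure)"
  by (intro borel_measurable_continuous_onI continuous_intros)

lemma snd_borel_measurable [measurable]:
  "snd \<in> borel_measurable (borel :: ('a::topological_space \<times> 'b::topological_space) measure)"
  by (intro borel_measurable_continuous_onI continuous_intros)

lemma dist_borel_measurable [measurable]:
  "(\<lambda>z::'a::metric_space \<times> 'a. dist (fst z) (snd z)) \<in> borel_measurable borel"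
  by (intro borel_measurable_continuous_onI continuous_intros)

lemma compact_metric_countable_basis:
  assumes "compact (UNIV :: 'a set)"
  obtains \<B> :: "'a::metric_space set set" where "countable \<B>" "topological_basis \<B>"
proof -
  have "\<exists>K. finite K \<and> (UNIV :: 'a set) \<subseteq> (\<Union>x\<in>K. ball x (1 / Suc n))" for n
    using seq_compact_imp_totally_bounded[OF compact_imp_seq_compact[OF assms]] by simp
  then obtain K where K: "\<And>n. finite (K n)" "\<And>n. (UNIV :: 'a set) \<subseteq> (\<Union>x\<in>K n. ball x (1 / Suc n))"
    by metis
  define \<B> where "\<B> = (\<Union>n. (\<lambda>x. ball x (1 / Suc n)) ` K n)"
  have "countable \<B>"
    unfolding \<B>_def by (auto intro!: countable_UN countable_image countable_finite[OF K(1)])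
  moreover have basis: "\<exists>b\<in>\<B>. x \<in> b \<and> b \<subseteq> S" if "open S" "x \<in> S" for S x
  proof -
    obtain e where e: "e > 0" "ball x e \<subseteq> S"
      using \<open>open S\<close> \<open>x \<in> S\<close> open_contains_ball by blast
    obtain n where n: "1 / real (Suc n) < e / 2"
      using nat_approx_posE[of "e / 2"] e(1) by auto
    have "x \<in> (\<Union>q\<in>K n. ball q (1 / Suc n))"
      using K(2) by blast
    then obtain q where q: "q \<in> K n" "dist q x < 1 / Suc n"
      by auto
    have "ball q (1 / Suc n) \<subseteq> ball x e"
    proof
      fix y assume "y \<in> ball q (1 / Suc n)"
      then have "dist x y < 2 / Suc n"
        using q(2) dist_triangle[of x y q] by (simp add: dist_commute)
      then show "y \<in> ball x e" using n by simp
    qed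
    moreover have "ball q (1 / Suc n) \<in> \<B>"
      using q(1) unfolding \<B>_def by blast
    moreover have "x \<in> ball q (1 / Suc n)"
      using q(2) by simp
    ultimately show ?thesis
      using e(2) by blast
  qed
  have "open b" if "b \<in> \<B>" for b
    using that unfolding \<B>_def by auto
  then have "topological_basis \<B>"
    using basis by (simp add: topological_basis_iff)
  ultimately show ?thesis
    by (rule that)
qed

lemma sets_pair_borel_compact:
  assumes "compact (UNIV :: 'a::metric_space set)"
  shows "sets (borel \<Otimes>\<^sub>M borel :: ('a \<times> 'a) measure) = sets borel"
proof
  show "sets (borel \<Otimes>\<^sub>M borel :: ('a \<times> 'a) measure) \<subseteq> sets borel"
    by (rule sets_pair_in_sets) (simp add: borel_Times)
  obtain \<B> :: "'a set set" where \<B>: "countable \<B>" "topological_basis \<B>"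
    using compact_metric_countable_basis[OF assms] by blast
  let ?R = "(\<lambda>(a, b). a \<times> b) ` (\<B> \<times> \<B>)"
  have "sets borel = sigma_sets UNIV ?R"
    using \<B> by (subst borel_eq_countable_basis[of ?R]) (auto intro: topological_basis_prod)
  moreover have "?R \<subseteq> sets (borel \<Otimes>\<^sub>M borel)"
    using topological_basis_open[OF \<B>(2)] by (auto intro!: pair_measureI)
  ultimately show "sets borel \<subseteq> sets (borel \<Otimes>\<^sub>M borel :: ('a \<times> 'a) measure)"
    using sets.sigma_sets_subset'[of ?R "borel \<Otimes>\<^sub>M borel" UNIV] sets.top[of "borel \<Otimes>\<^sub>M borel"]
    by (simp add: space_pair_measure)
qed

lemma compact_metric_finite_partition:
  assumes "compact (UNIV :: 'a set)" and "e > 0"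
  obtains C :: "nat \<Rightarrow> 'a::metric_space set" and n :: nat where
    "\<And>i. C i \<in> sets borel" "disjoint_family C" "(\<Union>i<n. C i) = UNIV"
    "\<And>i x y. x \<in> C i \<Longrightarrow> y \<in> C i \<Longrightarrow> dist x y \<le> e"
proof -
  obtain K where "finite K" "(UNIV :: 'a set) \<subseteq> (\<Union>x\<in>K. ball x (e / 2))"
    using seq_compact_imp_totally_bounded[OF compact_imp_seq_compact[OF assms(1)]] assms(2)
    by (metis half_gt_zero)
  moreover obtain n :: nat and f where "K = f ` {i. i < n}"
    using \<open>finite K\<close> unfolding finite_conv_nat_seg_image by blast
  ultimately have cover: "(\<Union>i<n. ball (f i) (e / 2)) = UNIV"
    by (auto simp: lessThan_def)
  define C where "C = disjointed (\<lambda>i. ball (f i) (e / 2))"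
  have "range C \<subseteq> sets borel"
    unfolding C_def by (rule sets.range_disjointed_sets) auto
  then have "C i \<in> sets borel" for i
    by blast
  moreover have "disjoint_family C"
    unfolding C_def by (rule disjoint_family_disjointed)
  moreover have "(\<Union>i<n. C i) = UNIV"
    using cover by (simp add: C_def finite_UN_disjointed_eq flip: atLeast0LessThan)
  moreover have "dist x y \<le> e" if "x \<in> C i" "y \<in> C i" for i x y
  proof -
    have "dist (f i) x < e / 2" "dist (f i) y < e / 2"
      using that disjointed_subset[of "\<lambda>i. ball (f i) (e / 2)" i] by (auto simp: C_def)
    then show ?thesis
      using dist_triangle[of x y "f i"] by (simp add: dist_commute)
  qed
  ultimately show ?thesis
    by (rule that)
qed

section \<open>Minkowski's inequality with slack\<close>

lemma powr_add_le_weighted: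
  fixes u v t p :: real
  assumes "u \<ge> 0" "v \<ge> 0" "0 < t" "t < 1" "p \<ge> 1"
  shows "(u + v) powr p \<le> t powr (1 - p) * u powr p + (1 - t) powr (1 - p) * v powr p"
proof -
  have weight_ge_1: "1 \<le> s powr (1 - p)" if "0 < s" "s \<le> 1" for s
    using powr_mono'[of "1 - p" 0 s] that assms(5) by simp
  have rescale: "s * (x / s) powr p = s powr (1 - p) * x powr p" if "0 < s" "x \<ge> 0" for s x
    using that by (simp add: powr_divide powr_diff)
  show ?thesis
  proof (cases "u = 0 \<or> v = 0")
    case True
    then show ?thesis
      using assms weight_ge_1[of t] weight_ge_1[of "1 - t"] by (auto simp: mult_le_cancel_right1)
  next
    case False
    then have "u / t > 0" "v / (1 - t) > 0"
      using assms by auto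
    then have "((1 - (1 - t)) *\<^sub>R (u / t) + (1 - t) *\<^sub>R (v / (1 - t))) powr p
          \<le> (1 - (1 - t)) * (u / t) powr p + (1 - t) * (v / (1 - t)) powr p"
      using convex_onD[OF powr_convex[OF assms(5)], of "1 - t" "u / t" "v / (1 - t)"] assms by simp
    then show ?thesis
      using assms rescale[of t u] rescale[of "1 - t" v] by simp
  qed
qed

lemma powr_convex_weights_eq:
  fixes A B p :: real
  assumes "A > 0" "B > 0"
  shows "(A / (A + B)) powr (1 - p) * A powr p + (B / (A + B)) powr (1 - p) * B powr p = (A + B) powr p"
proof -
  have inverse_powr: "(A + B) powr (p - 1) = inverse ((A + B) powr (1 - p))"
    using powr_minus[of "A + B" "1 - p"] by simp
  have "(S / (A + B)) powr (1 - p) * S powr p = S * (A + B) powr (p - 1)" if "S > 0" for S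
  proof -
    have "(S / (A + B)) powr (1 - p) * S powr p = (S powr (1 - p) * S powr p) / (A + B) powr (1 - p)"
      using that assms by (simp add: powr_divide)
    also have "S powr (1 - p) * S powr p = S"
      using that by (simp add: powr_add[symmetric])
    finally show ?thesis
      by (simp add: inverse_powr divide_inverse)
  qed
  then have "(A / (A + B)) powr (1 - p) * A powr p + (B / (A + B)) powr (1 - p) * B powr p
      = (A + B) * (A + B) powr (p - 1)"
    using assms by (simp add: distrib_right)
  also have "\<dots> = (A + B) powr p"
    using assms powr_add[of "A + B" 1 "p - 1"] by simp
  finally show ?thesis .
qed

text \<open>The slack \<open>d > 0\<close> keeps the convex weight \<open>A / (A + B)\<close> of the proof strictly between 0 and 1.\<close>
lemma nn_integral_powr_add_le:
  fixes f g :: "'b \<Rightarrow> real" and p a b d :: real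
  assumes f: "f \<in> borel_measurable M" and g: "g \<in> borel_measurable M"
    and nonneg: "\<And>x. f x \<ge> 0" "\<And>x. g x \<ge> 0"
    and "p \<ge> 1" "a \<ge> 0" "b \<ge> 0" "d > 0"
    and f_le: "(\<integral>\<^sup>+ x. ennreal (f x powr p) \<partial>M) \<le> ennreal (a powr p)"
    and g_le: "(\<integral>\<^sup>+ x. ennreal (g x powr p) \<partial>M) \<le> ennreal (b powr p)"
  shows "(\<integral>\<^sup>+ x. ennreal ((f x + g x) powr p) \<partial>M) \<le> ennreal ((a + b + d) powr p)"
proof -
  define A B where "A = a + d / 2" and "B = b + d / 2"
  have "A > 0" "B > 0"
    using assms by (auto simp: A_def B_def)
  define t where "t = A / (A + B)"
  have t: "0 < t" "t < 1" "1 - t = B / (A + B)"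
    using \<open>A > 0\<close> \<open>B > 0\<close> by (auto simp: t_def field_simps)
  have "(\<integral>\<^sup>+ x. ennreal ((f x + g x) powr p) \<partial>M)
     \<le> (\<integral>\<^sup>+ x. ennreal (t powr (1 - p)) * ennreal (f x powr p)
              + ennreal ((1 - t) powr (1 - p)) * ennreal (g x powr p) \<partial>M)"
    using powr_add_le_weighted[OF nonneg(1,2) t(1,2) \<open>p \<ge> 1\<close>]
    by (intro nn_integral_mono) (simp add: ennreal_mult[symmetric] ennreal_plus[symmetric] del: ennreal_plus)
  also have "\<dots> = ennreal (t powr (1 - p)) * (\<integral>\<^sup>+ x. ennreal (f x powr p) \<partial>M)
                  + ennreal ((1 - t) powr (1 - p)) * (\<integral>\<^sup>+ x. ennreal (g x powr p) \<partial>M)"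
    using f g by (simp add: nn_integral_add nn_integral_cmult)
  also have "\<dots> \<le> ennreal (t powr (1 - p)) * ennreal (a powr p) + ennreal ((1 - t) powr (1 - p)) * ennreal (b powr p)"
    by (intro add_mono mult_left_mono f_le g_le) auto
  also have "\<dots> \<le> ennreal (t powr (1 - p) * A powr p + (1 - t) powr (1 - p) * B powr p)"
    using assms
    by (simp add: ennreal_mult[symmetric] ennreal_plus[symmetric] A_def B_def powr_mono2 add_mono
        mult_left_mono del: ennreal_plus)
  also have "t powr (1 - p) * A powr p + (1 - t) powr (1 - p) * B powr p = (A + B) powr p"
    using powr_convex_weights_eq[OF \<open>A > 0\<close> \<open>B > 0\<close>] t(3) by (simp add: t_def)
  also have "A + B = a + b + d"
    by (simp add: A_def B_def)
  finally show ?thesis .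
qed

section \<open>Partial transport plans\<close>

lemma prob_distD:
  assumes "prob_dist \<mu>"
  shows "prob_space \<mu>" "sets \<mu> = sets borel" "space \<mu> = UNIV" "emeasure \<mu> UNIV = 1"
proof -
  show "prob_space \<mu>" "sets \<mu> = sets borel"
    using assms by (auto simp: prob_dist_def)
  then show "space \<mu> = UNIV"
    using sets_eq_imp_space_eq[of \<mu> borel] by simp
  then show "emeasure \<mu> UNIV = 1"
    using prob_space.emeasure_space_1[OF \<open>prob_space \<mu>\<close>] by simp
qed

lemma partial_planI:
  assumes "sets \<gamma> = sets borel" "emeasure \<gamma> UNIV = ennreal \<alpha>"
    and "\<And>A. A \<in> sets borel \<Longrightarrow> emeasure \<gamma> (A \<times> UNIV) \<le> emeasure \<mu> A"
    and "\<And>B. B \<in> sets borel \<Longrightarrow> emeasure \<gamma> (UNIV \<times> B) \<le> emeasure \<nu> B"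
  shows "partial_plan \<mu> \<nu> \<alpha> \<gamma>"
  using assms sets_eq_imp_space_eq[OF assms(1)] by (simp add: partial_plan_def)

lemma partial_planD:
  assumes "partial_plan \<mu> \<nu> \<alpha> \<gamma>"
  shows "sets \<gamma> = sets borel" "space \<gamma> = UNIV" "emeasure \<gamma> UNIV = ennreal \<alpha>" "finite_measure \<gamma>"
    and "A \<in> sets borel \<Longrightarrow> emeasure \<gamma> (A \<times> UNIV) \<le> emeasure \<mu> A"
    and "B \<in> sets borel \<Longrightarrow> emeasure \<gamma> (UNIV \<times> B) \<le> emeasure \<nu> B"
proof -
  show sets: "sets \<gamma> = sets borel"
    using assms by (simp add: partial_plan_def)
  show "space \<gamma> = UNIV"
    using sets_eq_imp_space_eq[OF sets] by simp
  then show "emeasure \<gamma> UNIV = ennreal \<alpha>" "finite_measure \<gamma>"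
    using assms by (auto simp: partial_plan_def intro: finite_measureI)
qed (use assms in \<open>auto simp: partial_plan_def\<close>)

definition transport_cost :: "real \<Rightarrow> ('a::metric_space \<times> 'a) measure \<Rightarrow> ennreal" where
  "transport_cost p \<gamma> = (\<integral>\<^sup>+ z. ennreal (dist (fst z) (snd z) powr p) \<partial>\<gamma>)"

lemma wcost_eq: "wcost p \<gamma> = enn2real (transport_cost p \<gamma>) powr (1 / p)"
  unfolding wcost_def transport_cost_def ..

lemma wcost_nonneg: "0 \<le> wcost p \<gamma>"
  by (simp add: wcost_def)

lemma transport_cost_integrand_measurable:
  "sets \<gamma> = sets borel \<Longrightarrow> (\<lambda>z. ennreal (dist (fst z) (snd z) powr p)) \<in> borel_measurable \<gamma>"
  by (subst measurable_cong_sets[of _ borel, OF _ refl]) (simp_all, measurable)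

lemma transport_cost_le_mass:
  assumes "\<forall>x y :: 'a. dist x y \<le> 1" and "p > 0"
  shows "transport_cost p (\<gamma> :: ('a::metric_space \<times> 'a) measure) \<le> emeasure \<gamma> (space \<gamma>)"
proof -
  have "transport_cost p \<gamma> \<le> (\<integral>\<^sup>+ z. 1 \<partial>\<gamma>)"
    unfolding transport_cost_def using assms by (intro nn_integral_mono) (simp add: powr_le1)
  then show ?thesis
    by simp
qed

lemma transport_cost_eq_wcost_powr:
  assumes "partial_plan \<mu> \<nu> \<alpha> \<gamma>" and "\<forall>x y :: 'a. dist x y \<le> 1" and "p > 0"
  shows "transport_cost p (\<gamma> :: ('a::metric_space \<times> 'a) measure) = ennreal (wcost p \<gamma> powr p)"
proof -
  have "transport_cost p \<gamma> \<le> ennreal \<alpha>"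
    using transport_cost_le_mass[OF assms(2,3), of \<gamma>] partial_planD(2,3)[OF assms(1)] by simp
  then have "transport_cost p \<gamma> \<noteq> \<infinity>"
    using ennreal_less_top[of \<alpha>] by (auto simp: top_unique)
  moreover have "wcost p \<gamma> powr p = enn2real (transport_cost p \<gamma>)"
    using assms(3) by (simp add: wcost_eq powr_powr)
  ultimately show ?thesis
    by (simp add: ennreal_enn2real_if)
qed

lemma wcost_le:
  assumes "transport_cost p \<gamma> \<le> ennreal (c powr p)" and "c \<ge> 0" and "p > 0"
  shows "wcost p \<gamma> \<le> c"
proof -
  have "enn2real (transport_cost p \<gamma>) powr (1 / p) \<le> (c powr p) powr (1 / p)"
    using enn2real_mono[OF assms(1)] assms(3) by (intro powr_mono2) auto
  then show ?thesis
    using assms(2,3) by (simp add: wcost_eq powr_powr)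
qed

lemma partial_plan_null: "partial_plan \<mu> \<nu> 0 (null_measure borel)"
  by (rule partial_planI) simp_all

lemma partial_plan_pair_measure:
  fixes \<mu> \<nu> :: "'a::metric_space measure"
  assumes "compact (UNIV :: 'a set)" and "prob_dist \<mu>" "prob_dist \<nu>"
  shows "partial_plan \<mu> \<nu> 1 (\<mu> \<Otimes>\<^sub>M \<nu>)"
proof -
  note \<mu> = prob_distD[OF assms(2)] and \<nu> = prob_distD[OF assms(3)]
  interpret \<nu>: prob_space \<nu>
    by (rule \<nu>(1))
  have rect: "emeasure (\<mu> \<Otimes>\<^sub>M \<nu>) (A \<times> B) = emeasure \<mu> A * emeasure \<nu> B"
    if "A \<in> sets borel" "B \<in> sets borel" for A B
    using that \<mu>(2) \<nu>(2) by (intro \<nu>.emeasure_pair_measure_Times) auto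
  show ?thesis
  proof (rule partial_planI)
    show "sets (\<mu> \<Otimes>\<^sub>M \<nu>) = sets borel"
      using sets_pair_measure_cong[OF \<mu>(2) \<nu>(2)] sets_pair_borel_compact[OF assms(1)] by simp
    show "emeasure (\<mu> \<Otimes>\<^sub>M \<nu>) UNIV = ennreal 1"
      using rect[of UNIV UNIV] \<mu>(4) \<nu>(4) by simp
    show "emeasure (\<mu> \<Otimes>\<^sub>M \<nu>) (A \<times> UNIV) \<le> emeasure \<mu> A" if "A \<in> sets borel" for A
      using rect[OF that, of UNIV] \<nu>(4) by simp
    show "emeasure (\<mu> \<Otimes>\<^sub>M \<nu>) (UNIV \<times> B) \<le> emeasure \<nu> B" if "B \<in> sets borel" for B
      using rect[OF _ that, of UNIV] \<mu>(4) by simp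
  qed
qed

lemma partial_plan_scale:
  assumes "partial_plan \<mu> \<nu> \<alpha> \<gamma>" and "0 \<le> \<alpha>" "0 \<le> c" "c \<le> 1"
  shows "partial_plan \<mu> \<nu> (c * \<alpha>) (scale_measure (ennreal c) \<gamma>)"
proof -
  note \<gamma> = partial_planD[OF assms(1)]
  have shrink: "ennreal c * x \<le> x" for x
    using mult_right_mono[of "ennreal c" 1 x] assms(4) by (simp add: ennreal_le_1)
  show ?thesis
    using \<gamma> assms(2,3) by (intro partial_planI) (auto simp: ennreal_mult intro: order_trans[OF shrink])
qed

lemma transport_cost_scale_measure:
  "sets \<gamma> = sets borel \<Longrightarrow> transport_cost p (scale_measure r \<gamma>) = r * transport_cost p \<gamma>"
  unfolding transport_cost_def
  by (simp add: nn_integral_scale_measure transport_cost_integrand_measurable)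

lemma partial_plan_diagonal:
  fixes \<mu> :: "'a::metric_space measure"
  assumes "prob_dist \<mu>"
  shows "partial_plan \<mu> \<mu> 1 (distr \<mu> borel (\<lambda>x. (x, x)))"
    and "transport_cost p (distr \<mu> borel (\<lambda>x. (x, x))) = 0"
proof -
  note \<mu> = prob_distD[OF assms]
  have diag: "(\<lambda>x::'a. (x, x)) \<in> measurable \<mu> borel"
    by (subst measurable_cong_sets[OF \<mu>(2) refl]) (intro borel_measurable_continuous_onI continuous_intros)
  have "emeasure (distr \<mu> borel (\<lambda>x. (x, x))) (A \<times> B) = emeasure \<mu> (A \<inter> B)"
    if "A \<in> sets borel" "B \<in> sets borel" for A B
    using emeasure_distr[OF diag borel_Times[OF that]] \<mu>(3) by (simp add: vimage_def Int_def)
  then show "partial_plan \<mu> \<mu> 1 (distr \<mu> borel (\<lambda>x. (x, x)))"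
    using \<mu>(4) by (intro partial_planI) (auto intro: emeasure_mono simp: \<mu>(2) simp flip: UNIV_Times_UNIV)
  show "transport_cost p (distr \<mu> borel (\<lambda>x. (x, x))) = 0"
    unfolding transport_cost_def
    by (simp add: nn_integral_distr[OF diag] transport_cost_integrand_measurable)
qed

lemma partial_plan_swap:
  fixes \<gamma> :: "('a::metric_space \<times> 'a) measure"
  assumes "partial_plan \<mu> \<nu> \<alpha> \<gamma>"
  shows "partial_plan \<nu> \<mu> \<alpha> (distr \<gamma> borel prod.swap)"
    and "transport_cost p (distr \<gamma> borel prod.swap) = transport_cost p \<gamma>"
proof -
  note \<gamma> = partial_planD[OF assms]
  have swap: "prod.swap \<in> measurable \<gamma> (borel :: ('a \<times> 'a) measure)"
    by (subst measurable_cong_sets[OF \<gamma>(1) refl]) (intro borel_measurable_continuous_onI continuous_on_swap)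
  have "emeasure (distr \<gamma> borel prod.swap) (A \<times> B) = emeasure \<gamma> (B \<times> A)"
    if "A \<in> sets borel" "B \<in> sets borel" for A B
  proof -
    have "prod.swap -` (A \<times> B) = B \<times> A"
      by auto
    then show ?thesis
      using emeasure_distr[OF swap borel_Times[OF that]] \<gamma>(2) by simp
  qed
  then show "partial_plan \<nu> \<mu> \<alpha> (distr \<gamma> borel prod.swap)"
    using \<gamma> by (intro partial_planI) (simp_all flip: UNIV_Times_UNIV)
  show "transport_cost p (distr \<gamma> borel prod.swap) = transport_cost p \<gamma>"
    unfolding transport_cost_def
    by (simp add: nn_integral_distr[OF swap] transport_cost_integrand_measurable dist_commute)
qed

lemma partial_W_le_wcost:
  "partial_plan \<mu> \<nu> \<alpha> \<gamma> \<Longrightarrow> partial_W p \<alpha> \<mu> \<nu> \<le> wcost p \<gamma>"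
  unfolding partial_W_def by (rule cInf_lower) (auto intro: bdd_belowI[of _ 0] wcost_nonneg)

lemma partial_W_approx:
  assumes "\<exists>\<gamma>. partial_plan \<mu> \<nu> \<alpha> \<gamma>" and "\<delta> > 0"
  obtains \<gamma> where "partial_plan \<mu> \<nu> \<alpha> \<gamma>" "wcost p \<gamma> < partial_W p \<alpha> \<mu> \<nu> + \<delta>"
proof -
  have "Inf {wcost p \<gamma> | \<gamma>. partial_plan \<mu> \<nu> \<alpha> \<gamma>} < partial_W p \<alpha> \<mu> \<nu> + \<delta>"
    using assms(2) by (simp add: partial_W_def)
  then show ?thesis
    using cInf_lessD[of "{wcost p \<gamma> | \<gamma>. partial_plan \<mu> \<nu> \<alpha> \<gamma>}"] assms(1) that by blast
qed

lemma ex_partial_plan: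
  fixes \<mu> \<nu> :: "'a::metric_space measure"
  assumes "compact (UNIV :: 'a set)" "prob_dist \<mu>" "prob_dist \<nu>" "0 \<le> \<alpha>" "\<alpha> \<le> 1"
  shows "\<exists>\<gamma>. partial_plan \<mu> \<nu> \<alpha> \<gamma>"
  using partial_plan_scale[OF partial_plan_pair_measure[OF assms(1-3)], of \<alpha>] assms(4,5) by auto

lemma partial_plan_reduce_mass:
  fixes \<gamma> :: "('a::metric_space \<times> 'a) measure"
  assumes "partial_plan \<mu> \<nu> m \<gamma>" and "0 \<le> \<alpha>" "\<alpha> \<le> m"
    and "\<forall>x y :: 'a. dist x y \<le> 1" and "p > 0"
  obtains \<gamma>' where "partial_plan \<mu> \<nu> \<alpha> \<gamma>'" "wcost p \<gamma>' \<le> wcost p \<gamma>"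
proof (cases "m = 0")
  case True
  then show ?thesis
    using assms(1-3) that by auto
next
  case False
  define c where "c = \<alpha> / m"
  have c: "0 \<le> c" "c \<le> 1" "c * m = \<alpha>"
    using assms(2,3) False by (auto simp: c_def)
  note \<gamma>' = partial_plan_scale[OF assms(1) _ c(1,2)]
  have "transport_cost p (scale_measure (ennreal c) \<gamma>) = ennreal c * transport_cost p \<gamma>"
    by (rule transport_cost_scale_measure[OF partial_planD(1)[OF assms(1)]])
  also have "\<dots> \<le> transport_cost p \<gamma>"
    using mult_right_mono[of "ennreal c" 1] c(2) by (simp add: ennreal_le_1)
  also have "\<dots> = ennreal (wcost p \<gamma> powr p)"
    by (rule transport_cost_eq_wcost_powr[OF assms(1,4,5)])
  finally have "wcost p (scale_measure (ennreal c) \<gamma>) \<le> wcost p \<gamma>"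
    by (rule wcost_le) (simp_all add: wcost_nonneg assms(5))
  then show ?thesis
    using that \<gamma>' assms(2,3) c(3) by auto
qed

lemma partial_W_commute:
  fixes \<mu> \<nu> :: "'a::metric_space measure"
  shows "partial_W p \<alpha> \<mu> \<nu> = partial_W p \<alpha> \<nu> \<mu>"
proof -
  have swap: "{wcost p \<gamma> | \<gamma>. partial_plan \<mu> \<nu> \<alpha> \<gamma>} \<subseteq> {wcost p \<gamma> | \<gamma>. partial_plan \<nu> \<mu> \<alpha> \<gamma>}"
    for \<mu> \<nu> :: "'a measure"
  proof
    fix w assume "w \<in> {wcost p \<gamma> | \<gamma>. partial_plan \<mu> \<nu> \<alpha> \<gamma>}"
    then obtain \<gamma> where \<gamma>: "partial_plan \<mu> \<nu> \<alpha> \<gamma>" "w = wcost p \<gamma>"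
      by blast
    then have "w = wcost p (distr \<gamma> borel prod.swap)"
      using partial_plan_swap(2)[OF \<gamma>(1)] by (simp add: wcost_eq)
    then show "w \<in> {wcost p \<gamma> | \<gamma>. partial_plan \<nu> \<mu> \<alpha> \<gamma>}"
      using partial_plan_swap(1)[OF \<gamma>(1)] by blast
  qed
  show ?thesis
    unfolding partial_W_def using subset_antisym[OF swap[of \<mu> \<nu>] swap[of \<nu> \<mu>]] by simp
qed

lemma partial_W_zero_mass: "partial_W p 0 \<mu> \<nu> \<le> 0"
  using partial_W_le_wcost[OF partial_plan_null] by (simp add: wcost_eq transport_cost_def)

lemma partial_W_self:
  fixes \<mu> :: "'a::metric_space measure"
  assumes "prob_dist \<mu>"
  shows "partial_W p 1 \<mu> \<mu> \<le> 0"
  using partial_W_le_wcost[OF partial_plan_diagonal(1)[OF assms]] partial_plan_diagonal(2)[OF assms]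
  by (simp add: wcost_eq)

section \<open>Gluing partial plans\<close>

lemma nn_integral_sum_partition:
  fixes n :: nat
  assumes "disjoint_family C" "(\<Union>i<n. C i) = UNIV" "\<And>i. C i \<in> sets borel"
    and "g \<in> measurable M borel" "F \<in> borel_measurable M"
  shows "(\<Sum>i<n. \<integral>\<^sup>+ u. indicator (C i) (g u) * F u \<partial>M) = (\<integral>\<^sup>+ u. F u \<partial>M)"
proof -
  have "(\<Sum>i<n. indicator (C i) (g u) * F u) = F u" for u
  proof -
    obtain j where "j < n" "g u \<in> C j"
      using assms(2) by blast
    then have "(\<Sum>i<n. 1 * indicator (C i) (g u)) = (1 :: ennreal)"
      using assms(1) by (subst sum_indicator_disjoint_family[of C "{..<n}" "g u" j])
        (auto intro: disjoint_family_on_mono)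
    then show ?thesis
      by (simp add: sum_distrib_right[symmetric])
  qed
  moreover have "(\<lambda>u. indicator (C i) (g u) * F u) \<in> borel_measurable M" for i
    using assms(3-5) by measurable
  ultimately show ?thesis
    by (simp add: nn_integral_sum[symmetric])
qed

lemma nn_integral_pair_measure_mult:
  assumes "sigma_finite_measure M1" "sigma_finite_measure M2"
    and "f \<in> borel_measurable M1" "g \<in> borel_measurable M2"
  shows "(\<integral>\<^sup>+ z. f (fst z) * g (snd z) \<partial>(M1 \<Otimes>\<^sub>M M2)) = (\<integral>\<^sup>+ x. f x \<partial>M1) * (\<integral>\<^sup>+ y. g y \<partial>M2)"
proof -
  interpret pair_sigma_finite M1 M2
    using assms(1,2) by (intro pair_sigma_finite.intro)
  have "(\<integral>\<^sup>+ z. f (fst z) * g (snd z) \<partial>(M1 \<Otimes>\<^sub>M M2)) = (\<integral>\<^sup>+ x. \<integral>\<^sup>+ y. f x * g y \<partial>M2 \<partial>M1)"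
    using assms(3,4) by (subst M2.nn_integral_fst[symmetric]) simp_all
  also have "\<dots> = (\<integral>\<^sup>+ x. f x * (\<integral>\<^sup>+ y. g y \<partial>M2) \<partial>M1)"
    using assms(4) by (simp add: nn_integral_cmult)
  also have "\<dots> = (\<integral>\<^sup>+ x. f x \<partial>M1) * (\<integral>\<^sup>+ y. g y \<partial>M2)"
    using assms(3) by (simp add: nn_integral_multc)
  finally show ?thesis .
qed

lemma cell_weight_le:
  fixes a b :: real and X Y :: ennreal
  assumes "0 \<le> a" "0 \<le> b" "X \<le> ennreal a" "Y \<le> ennreal b"
  shows "ennreal (min a b / (a * b)) * X * Y \<le> X" "ennreal (min a b / (a * b)) * X * Y \<le> Y"
proof -
  have first: "ennreal (min a b / (a * b)) * X * Y \<le> X"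
    if "0 \<le> a" "0 \<le> b" "Y \<le> ennreal b" for a b :: real and X Y :: ennreal
  proof (cases "a = 0 \<or> b = 0")
    case True
    then show ?thesis
      by auto
  next
    case False
    then have "a > 0" "b > 0"
      using that by auto
    have "ennreal (min a b / (a * b)) * X * Y \<le> ennreal (min a b / (a * b)) * X * ennreal b"
      using that(3) by (intro mult_left_mono) auto
    also have "\<dots> = ennreal (min a b / a) * X"
      using \<open>a > 0\<close> \<open>b > 0\<close> by (simp add: ennreal_mult[symmetric] mult_ac)
    also have "\<dots> \<le> 1 * X"
      using \<open>a > 0\<close> \<open>b \<ge> 0\<close> by (intro mult_right_mono) (auto simp: divide_le_eq_1)
    finally show ?thesis
      by simp
  qed
  show "ennreal (min a b / (a * b)) * X * Y \<le> X"
    using first assms by blast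
  show "ennreal (min a b / (a * b)) * X * Y \<le> Y"
    using first[of b a X Y] assms by (simp add: min.commute mult_ac)
qed

text \<open>Gluing two partial plans along a finite Borel partition \<open>C\<close> of the middle space: inside each
  cell, the \<open>\<gamma>\<^sub>1\<close>-mass arriving in \<open>C i\<close> is coupled independently with the \<open>\<gamma>\<^sub>2\<close>-mass leaving
  \<open>C i\<close>, rescaled to total mass \<open>min (in_mass i) (out_mass i)\<close>; the glued plan then forgets the
  intermediate points.\<close>
locale plan_gluing =
  fixes \<gamma>\<^sub>1 \<gamma>\<^sub>2 :: "('a::metric_space \<times> 'a) measure" and n :: nat and C :: "nat \<Rightarrow> 'a set"
  assumes sets_\<gamma>\<^sub>1 [measurable_cong]: "sets \<gamma>\<^sub>1 = sets borel"
    and sets_\<gamma>\<^sub>2 [measurable_cong]: "sets \<gamma>\<^sub>2 = sets borel"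
    and finite_\<gamma>\<^sub>1: "finite_measure \<gamma>\<^sub>1" and finite_\<gamma>\<^sub>2: "finite_measure \<gamma>\<^sub>2"
    and cells_borel [measurable]: "\<And>i. C i \<in> sets borel"
    and cells_disjoint: "disjoint_family C"
    and cells_cover: "(\<Union>i<n. C i) = UNIV"
    and compact_UNIV: "compact (UNIV :: 'a set)"
begin

definition in_mass :: "nat \<Rightarrow> real" where
  "in_mass i = measure \<gamma>\<^sub>1 (UNIV \<times> C i)"

definition out_mass :: "nat \<Rightarrow> real" where
  "out_mass i = measure \<gamma>\<^sub>2 (C i \<times> UNIV)"

text \<open>On cells missed by one of the plans the weight is \<open>0\<close>, as division by \<open>0\<close> yields \<open>0\<close>.\<close>
definition weight :: "nat \<Rightarrow> real" where
  "weight i = min (in_mass i) (out_mass i) / (in_mass i * out_mass i)"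

definition glue_density :: "('a \<times> 'a) \<times> ('a \<times> 'a) \<Rightarrow> ennreal" where
  "glue_density z =
     (\<Sum>i<n. ennreal (weight i) * indicator (C i) (snd (fst z)) * indicator (C i) (fst (snd z)))"

definition glued_coupling :: "(('a \<times> 'a) \<times> ('a \<times> 'a)) measure" where
  "glued_coupling = density (\<gamma>\<^sub>1 \<Otimes>\<^sub>M \<gamma>\<^sub>2) glue_density"

definition glued_plan :: "('a \<times> 'a) measure" where
  "glued_plan = distr glued_coupling borel (\<lambda>z. (fst (fst z), snd (snd z)))"

lemma glue_density_measurable [measurable]: "glue_density \<in> borel_measurable (\<gamma>\<^sub>1 \<Otimes>\<^sub>M \<gamma>\<^sub>2)"
  unfolding glue_density_def[abs_def] by measurable

lemma in_mass_eq: "(\<integral>\<^sup>+ u. indicator (C i) (snd u) \<partial>\<gamma>\<^sub>1) = ennreal (in_mass i)"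
proof -
  have "(\<integral>\<^sup>+ u. indicator (C i) (snd u) \<partial>\<gamma>\<^sub>1) = (\<integral>\<^sup>+ u. indicator (UNIV \<times> C i) u \<partial>\<gamma>\<^sub>1)"
    by (intro nn_integral_cong) (simp add: indicator_def mem_Times_iff)
  also have "\<dots> = emeasure \<gamma>\<^sub>1 (UNIV \<times> C i)"
    by (intro nn_integral_indicator) (simp add: borel_Times sets_\<gamma>\<^sub>1)
  finally show ?thesis
    by (simp add: in_mass_def finite_measure.emeasure_eq_measure[OF finite_\<gamma>\<^sub>1])
qed

lemma out_mass_eq: "(\<integral>\<^sup>+ v. indicator (C i) (fst v) \<partial>\<gamma>\<^sub>2) = ennreal (out_mass i)"
proof -
  have "(\<integral>\<^sup>+ v. indicator (C i) (fst v) \<partial>\<gamma>\<^sub>2) = (\<integral>\<^sup>+ v. indicator (C i \<times> UNIV) v \<partial>\<gamma>\<^sub>2)"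
    by (intro nn_integral_cong) (simp add: indicator_def mem_Times_iff)
  also have "\<dots> = emeasure \<gamma>\<^sub>2 (C i \<times> UNIV)"
    by (intro nn_integral_indicator) (simp add: borel_Times sets_\<gamma>\<^sub>2)
  finally show ?thesis
    by (simp add: out_mass_def finite_measure.emeasure_eq_measure[OF finite_\<gamma>\<^sub>2])
qed


lemma nn_integral_glue_density:
  assumes [measurable]: "F \<in> borel_measurable \<gamma>\<^sub>1" "H \<in> borel_measurable \<gamma>\<^sub>2"
  shows "(\<integral>\<^sup>+ z. glue_density z * (F (fst z) * H (snd z)) \<partial>(\<gamma>\<^sub>1 \<Otimes>\<^sub>M \<gamma>\<^sub>2))
    = (\<Sum>i<n. ennreal (weight i) * (\<integral>\<^sup>+ u. indicator (C i) (snd u) * F u \<partial>\<gamma>\<^sub>1)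
                              * (\<integral>\<^sup>+ v. indicator (C i) (fst v) * H v \<partial>\<gamma>\<^sub>2))"
proof -
  define F' H' where "F' i u = indicator (C i) (snd u) * F u" and "H' i v = indicator (C i) (fst v) * H v"
    for i u v
  have [measurable]: "F' i \<in> borel_measurable \<gamma>\<^sub>1" "H' i \<in> borel_measurable \<gamma>\<^sub>2" for i
    unfolding F'_def[abs_def] H'_def[abs_def] by measurable
  have "glue_density z * (F (fst z) * H (snd z)) = (\<Sum>i<n. ennreal (weight i) * (F' i (fst z) * H' i (snd z)))"
    for z
    unfolding glue_density_def F'_def H'_def sum_distrib_right by (intro sum.cong) (simp_all add: mult_ac)
  then have "(\<integral>\<^sup>+ z. glue_density z * (F (fst z) * H (snd z)) \<partial>(\<gamma>\<^sub>1 \<Otimes>\<^sub>M \<gamma>\<^sub>2))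
      = (\<Sum>i<n. ennreal (weight i) * (\<integral>\<^sup>+ z. F' i (fst z) * H' i (snd z) \<partial>(\<gamma>\<^sub>1 \<Otimes>\<^sub>M \<gamma>\<^sub>2)))"
    by (simp add: nn_integral_sum nn_integral_cmult)
  also have "\<dots> = (\<Sum>i<n. ennreal (weight i) * ((\<integral>\<^sup>+ u. F' i u \<partial>\<gamma>\<^sub>1) * (\<integral>\<^sup>+ v. H' i v \<partial>\<gamma>\<^sub>2)))"
    using finite_\<gamma>\<^sub>1 finite_\<gamma>\<^sub>2
    by (simp add: nn_integral_pair_measure_mult finite_measure.sigma_finite_measure)
  finally show ?thesis
    by (simp add: F'_def H'_def mult.assoc)
qed

lemma nn_integral_glue_density_le:
  assumes "F \<in> borel_measurable \<gamma>\<^sub>1" "H \<in> borel_measurable \<gamma>\<^sub>2" "\<And>u. F u \<le> 1" "\<And>v. H v \<le> 1"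
  shows "(\<integral>\<^sup>+ z. glue_density z * (F (fst z) * H (snd z)) \<partial>(\<gamma>\<^sub>1 \<Otimes>\<^sub>M \<gamma>\<^sub>2)) \<le> (\<integral>\<^sup>+ u. F u \<partial>\<gamma>\<^sub>1)"
    and "(\<integral>\<^sup>+ z. glue_density z * (F (fst z) * H (snd z)) \<partial>(\<gamma>\<^sub>1 \<Otimes>\<^sub>M \<gamma>\<^sub>2)) \<le> (\<integral>\<^sup>+ v. H v \<partial>\<gamma>\<^sub>2)"
proof -
  define X Y where "X i = (\<integral>\<^sup>+ u. indicator (C i) (snd u) * F u \<partial>\<gamma>\<^sub>1)"
    and "Y i = (\<integral>\<^sup>+ v. indicator (C i) (fst v) * H v \<partial>\<gamma>\<^sub>2)" for i
  have "X i \<le> (\<integral>\<^sup>+ u. indicator (C i) (snd u) \<partial>\<gamma>\<^sub>1)" "Y i \<le> (\<integral>\<^sup>+ v. indicator (C i) (fst v) \<partial>\<gamma>\<^sub>2)" for i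
    unfolding X_def Y_def using assms(3,4)
    by (auto intro!: nn_integral_mono simp: indicator_def)
  then have XY: "X i \<le> ennreal (in_mass i)" "Y i \<le> ennreal (out_mass i)" for i
    by (simp_all add: in_mass_eq out_mass_eq)
  have nonneg: "0 \<le> in_mass i" "0 \<le> out_mass i" for i
    by (simp_all add: in_mass_def out_mass_def)
  have lhs: "(\<integral>\<^sup>+ z. glue_density z * (F (fst z) * H (snd z)) \<partial>(\<gamma>\<^sub>1 \<Otimes>\<^sub>M \<gamma>\<^sub>2))
      = (\<Sum>i<n. ennreal (weight i) * X i * Y i)"
    unfolding X_def Y_def by (rule nn_integral_glue_density[OF assms(1,2)])
  have "(\<Sum>i<n. ennreal (weight i) * X i * Y i) \<le> (\<Sum>i<n. X i)"
    unfolding weight_def by (intro sum_mono cell_weight_le(1)[OF nonneg XY])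
  also have "\<dots> = (\<integral>\<^sup>+ u. F u \<partial>\<gamma>\<^sub>1)"
    unfolding X_def using cells_disjoint cells_cover assms(1)
    by (intro nn_integral_sum_partition) simp_all
  finally show "(\<integral>\<^sup>+ z. glue_density z * (F (fst z) * H (snd z)) \<partial>(\<gamma>\<^sub>1 \<Otimes>\<^sub>M \<gamma>\<^sub>2)) \<le> (\<integral>\<^sup>+ u. F u \<partial>\<gamma>\<^sub>1)"
    unfolding lhs .
  have "(\<Sum>i<n. ennreal (weight i) * X i * Y i) \<le> (\<Sum>i<n. Y i)"
    unfolding weight_def by (intro sum_mono cell_weight_le(2)[OF nonneg XY])
  also have "\<dots> = (\<integral>\<^sup>+ v. H v \<partial>\<gamma>\<^sub>2)"
    unfolding Y_def using cells_disjoint cells_cover assms(2)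
    by (intro nn_integral_sum_partition) simp_all
  finally show "(\<integral>\<^sup>+ z. glue_density z * (F (fst z) * H (snd z)) \<partial>(\<gamma>\<^sub>1 \<Otimes>\<^sub>M \<gamma>\<^sub>2)) \<le> (\<integral>\<^sup>+ v. H v \<partial>\<gamma>\<^sub>2)"
    unfolding lhs .
qed

lemma nn_integral_glued_coupling:
  "f \<in> borel_measurable (\<gamma>\<^sub>1 \<Otimes>\<^sub>M \<gamma>\<^sub>2) \<Longrightarrow>
    (\<integral>\<^sup>+ z. f z \<partial>glued_coupling) = (\<integral>\<^sup>+ z. glue_density z * f z \<partial>(\<gamma>\<^sub>1 \<Otimes>\<^sub>M \<gamma>\<^sub>2))"
  unfolding glued_coupling_def by (rule nn_integral_density) simp_all

lemma glued_coupling_fst_le: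
  assumes "F \<in> borel_measurable \<gamma>\<^sub>1" "\<And>u. F u \<le> 1"
  shows "(\<integral>\<^sup>+ z. F (fst z) \<partial>glued_coupling) \<le> (\<integral>\<^sup>+ u. F u \<partial>\<gamma>\<^sub>1)"
  using nn_integral_glue_density_le(1)[OF assms(1) _ assms(2), of "\<lambda>_. 1"] assms(1)
  by (simp add: nn_integral_glued_coupling measurable_fst'')

lemma glued_coupling_snd_le:
  assumes "H \<in> borel_measurable \<gamma>\<^sub>2" "\<And>v. H v \<le> 1"
  shows "(\<integral>\<^sup>+ z. H (snd z) \<partial>glued_coupling) \<le> (\<integral>\<^sup>+ v. H v \<partial>\<gamma>\<^sub>2)"
  using nn_integral_glue_density_le(2)[OF _ assms(1) _ assms(2), of "\<lambda>_. 1"] assms(1)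
  by (simp add: nn_integral_glued_coupling measurable_snd'')

lemma AE_glued_coupling_same_cell:
  "AE z in glued_coupling. \<exists>i. snd (fst z) \<in> C i \<and> fst (snd z) \<in> C i"
proof -
  have "glue_density z = 0" if "\<nexists>i. snd (fst z) \<in> C i \<and> fst (snd z) \<in> C i" for z
    unfolding glue_density_def using that by (intro sum.neutral) (auto simp: indicator_def)
  then have "AE z in \<gamma>\<^sub>1 \<Otimes>\<^sub>M \<gamma>\<^sub>2. 0 < glue_density z \<longrightarrow> (\<exists>i. snd (fst z) \<in> C i \<and> fst (snd z) \<in> C i)"
    by (intro AE_I2 impI) (metis less_irrefl)
  then show ?thesis
    unfolding glued_coupling_def by (subst AE_density) simp_all
qed

lemma emeasure_glued_coupling:
  "emeasure glued_coupling (space glued_coupling) = (\<Sum>i<n. ennreal (min (in_mass i) (out_mass i)))"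
proof -
  have "emeasure glued_coupling (space glued_coupling)
      = (\<integral>\<^sup>+ z. glue_density z * indicator (space (\<gamma>\<^sub>1 \<Otimes>\<^sub>M \<gamma>\<^sub>2)) z \<partial>(\<gamma>\<^sub>1 \<Otimes>\<^sub>M \<gamma>\<^sub>2))"
    by (simp add: glued_coupling_def emeasure_density)
  also have "\<dots> = (\<integral>\<^sup>+ z. glue_density z * ((\<lambda>_. 1) (fst z) * (\<lambda>_. 1) (snd z)) \<partial>(\<gamma>\<^sub>1 \<Otimes>\<^sub>M \<gamma>\<^sub>2))"
    by (intro nn_integral_cong) simp
  also have "\<dots> = (\<Sum>i<n. ennreal (weight i) * ennreal (in_mass i) * ennreal (out_mass i))"
    by (subst nn_integral_glue_density) (simp_all add: in_mass_eq out_mass_eq)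
  also have "\<dots> = (\<Sum>i<n. ennreal (min (in_mass i) (out_mass i)))"
    by (intro sum.cong) (auto simp: weight_def ennreal_mult[symmetric] in_mass_def out_mass_def)
  finally show ?thesis .
qed


lemma outer_pair_measurable [measurable]:
  "(\<lambda>z. (fst (fst z), snd (snd z))) \<in> measurable glued_coupling (borel :: ('a \<times> 'a) measure)"
proof -
  have "(\<lambda>z. (fst (fst z), snd (snd z))) \<in> measurable (\<gamma>\<^sub>1 \<Otimes>\<^sub>M \<gamma>\<^sub>2) (borel \<Otimes>\<^sub>M borel)"
    by measurable
  then show ?thesis
    unfolding glued_coupling_def
    by (simp add: measurable_cong_sets[OF refl sets_pair_borel_compact[OF compact_UNIV]])
qed

lemma sets_glued_plan: "sets glued_plan = sets borel"
  by (simp add: glued_plan_def)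

lemma nn_integral_glued_plan:
  "h \<in> borel_measurable borel \<Longrightarrow>
    (\<integral>\<^sup>+ x. h x \<partial>glued_plan) = (\<integral>\<^sup>+ z. h (fst (fst z), snd (snd z)) \<partial>glued_coupling)"
  unfolding glued_plan_def by (rule nn_integral_distr) simp_all

lemma emeasure_glued_plan_fst_le:
  assumes "A \<in> sets borel"
  shows "emeasure glued_plan (A \<times> UNIV) \<le> emeasure \<gamma>\<^sub>1 (A \<times> UNIV)"
proof -
  have [measurable]: "A \<times> UNIV \<in> sets (borel :: ('a \<times> 'a) measure)"
    using assms by (simp add: borel_Times)
  have "emeasure glued_plan (A \<times> UNIV) = (\<integral>\<^sup>+ x. indicator (A \<times> UNIV) x \<partial>glued_plan)"
    using sets_glued_plan by simp
  also have "\<dots> = (\<integral>\<^sup>+ z. indicator (A \<times> UNIV) (fst (fst z), snd (snd z)) \<partial>glued_coupling)"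
    by (rule nn_integral_glued_plan) measurable
  also have "\<dots> = (\<integral>\<^sup>+ z. indicator (A \<times> UNIV) (fst z) \<partial>glued_coupling)"
    by (simp add: indicator_def mem_Times_iff)
  also have "\<dots> \<le> (\<integral>\<^sup>+ u. indicator (A \<times> UNIV) u \<partial>\<gamma>\<^sub>1)"
    by (rule glued_coupling_fst_le) (simp_all add: indicator_def)
  also have "\<dots> = emeasure \<gamma>\<^sub>1 (A \<times> UNIV)"
    by (simp add: sets_\<gamma>\<^sub>1)
  finally show ?thesis .
qed

lemma emeasure_glued_plan_snd_le:
  assumes "B \<in> sets borel"
  shows "emeasure glued_plan (UNIV \<times> B) \<le> emeasure \<gamma>\<^sub>2 (UNIV \<times> B)"
proof -
  have [measurable]: "UNIV \<times> B \<in> sets (borel :: ('a \<times> 'a) measure)"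
    using assms by (simp add: borel_Times)
  have "emeasure glued_plan (UNIV \<times> B) = (\<integral>\<^sup>+ x. indicator (UNIV \<times> B) x \<partial>glued_plan)"
    using sets_glued_plan by simp
  also have "\<dots> = (\<integral>\<^sup>+ z. indicator (UNIV \<times> B) (fst (fst z), snd (snd z)) \<partial>glued_coupling)"
    by (rule nn_integral_glued_plan) measurable
  also have "\<dots> = (\<integral>\<^sup>+ z. indicator (UNIV \<times> B) (snd z) \<partial>glued_coupling)"
    by (simp add: indicator_def mem_Times_iff)
  also have "\<dots> \<le> (\<integral>\<^sup>+ v. indicator (UNIV \<times> B) v \<partial>\<gamma>\<^sub>2)"
    by (rule glued_coupling_snd_le) (simp_all add: indicator_def)
  also have "\<dots> = emeasure \<gamma>\<^sub>2 (UNIV \<times> B)"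
    by (simp add: sets_\<gamma>\<^sub>2)
  finally show ?thesis .
qed

lemma emeasure_glued_plan: "emeasure glued_plan UNIV = (\<Sum>i<n. ennreal (min (in_mass i) (out_mass i)))"
proof -
  have "emeasure glued_plan UNIV = emeasure glued_coupling (space glued_coupling)"
    unfolding glued_plan_def by (subst emeasure_distr) simp_all
  then show ?thesis
    using emeasure_glued_coupling by simp
qed

lemma transport_cost_glued_plan_le_detour:
  assumes cell_diam: "\<And>i x y. x \<in> C i \<Longrightarrow> y \<in> C i \<Longrightarrow> dist x y \<le> \<delta>" and "p \<ge> 0"
  shows "transport_cost p glued_plan \<le>
    (\<integral>\<^sup>+ z. ennreal ((dist (fst (fst z)) (snd (fst z)) + (\<delta> + dist (fst (snd z)) (snd (snd z)))) powr p)
      \<partial>glued_coupling)"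
proof -
  have triangle: "dist (fst (fst z)) (snd (snd z))
      \<le> dist (fst (fst z)) (snd (fst z)) + (\<delta> + dist (fst (snd z)) (snd (snd z)))"
    if "snd (fst z) \<in> C i" "fst (snd z) \<in> C i" for z i
    using cell_diam[OF that] dist_triangle[of "fst (fst z)" "snd (snd z)" "snd (fst z)"]
      dist_triangle[of "snd (fst z)" "snd (snd z)" "fst (snd z)"]
    by simp
  have "AE z in glued_coupling. dist (fst (fst z)) (snd (snd z)) powr p
      \<le> (dist (fst (fst z)) (snd (fst z)) + (\<delta> + dist (fst (snd z)) (snd (snd z)))) powr p"
    using AE_glued_coupling_same_cell
    by eventually_elim (use triangle assms(2) in \<open>auto intro!: powr_mono2\<close>)
  then show ?thesis
    unfolding transport_cost_def
    by (subst nn_integral_glued_plan) (auto intro!: nn_integral_mono_AE)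
qed

lemma transport_cost_glued_plan:
  assumes "p \<ge> 1" "\<delta> > 0" and cell_diam: "\<And>i x y. x \<in> C i \<Longrightarrow> y \<in> C i \<Longrightarrow> dist x y \<le> \<delta>"
    and "\<forall>x y :: 'a. dist x y \<le> 1" and "emeasure \<gamma>\<^sub>1 (space \<gamma>\<^sub>1) \<le> 1"
    and "c\<^sub>1 \<ge> 0" "transport_cost p \<gamma>\<^sub>1 \<le> ennreal (c\<^sub>1 powr p)"
    and "c\<^sub>2 \<ge> 0" "transport_cost p \<gamma>\<^sub>2 \<le> ennreal (c\<^sub>2 powr p)"
  shows "transport_cost p glued_plan \<le> ennreal ((c\<^sub>1 + c\<^sub>2 + 2 * \<delta>) powr p)"
proof -
  define d :: "'a \<times> 'a \<Rightarrow> real" where "d u = dist (fst u) (snd u)" for u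
  have d_le_1: "ennreal (d u powr p) \<le> 1" for u
    using assms(1,4) by (simp add: d_def powr_le1)
  have [measurable]: "d \<in> borel_measurable \<gamma>\<^sub>1" "d \<in> borel_measurable \<gamma>\<^sub>2"
    unfolding d_def[abs_def] by measurable
  have d_nonneg: "0 \<le> d u" for u
    by (simp add: d_def)
  have d_measurable: "(\<lambda>z. d (fst z)) \<in> borel_measurable glued_coupling"
      "(\<lambda>z. d (snd z)) \<in> borel_measurable glued_coupling"
      "(\<lambda>z. \<delta> + d (snd z)) \<in> borel_measurable glued_coupling"
    unfolding glued_coupling_def by measurable
  have cost\<^sub>1: "(\<integral>\<^sup>+ z. ennreal (d (fst z) powr p) \<partial>glued_coupling) \<le> ennreal (c\<^sub>1 powr p)"
    using glued_coupling_fst_le[of "\<lambda>u. ennreal (d u powr p)", OF _ d_le_1] assms(7)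
    by (simp add: transport_cost_def d_def)
  have cost\<^sub>2: "(\<integral>\<^sup>+ z. ennreal (d (snd z) powr p) \<partial>glued_coupling) \<le> ennreal (c\<^sub>2 powr p)"
    using glued_coupling_snd_le[of "\<lambda>u. ennreal (d u powr p)", OF _ d_le_1] assms(9)
    by (simp add: transport_cost_def d_def)
  have total_mass: "emeasure glued_coupling (space glued_coupling) \<le> 1"
    using glued_coupling_fst_le[of "\<lambda>_. 1"] assms(5) by simp
  have mass: "(\<integral>\<^sup>+ z. ennreal (\<delta> powr p) \<partial>glued_coupling) \<le> ennreal (\<delta> powr p)"
    using mult_left_mono[OF total_mass, of "ennreal (\<delta> powr p)"] by simp
  have shifted_cost\<^sub>2: "(\<integral>\<^sup>+ z. ennreal ((\<delta> + d (snd z)) powr p) \<partial>glued_coupling)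
      \<le> ennreal ((\<delta> + c\<^sub>2 + \<delta> / 2) powr p)"
    by (rule nn_integral_powr_add_le[where f = "\<lambda>_. \<delta>"])
      (use assms(1,2,8) mass cost\<^sub>2 in \<open>simp_all add: d_nonneg d_measurable\<close>)
  have "(\<integral>\<^sup>+ z. ennreal ((d (fst z) + (\<delta> + d (snd z))) powr p) \<partial>glued_coupling)
      \<le> ennreal ((c\<^sub>1 + (\<delta> + c\<^sub>2 + \<delta> / 2) + \<delta> / 2) powr p)"
    by (rule nn_integral_powr_add_le)
      (use assms(1,2,6,8) cost\<^sub>1 shifted_cost\<^sub>2 in \<open>simp_all add: d_nonneg d_measurable\<close>)
  moreover have "transport_cost p glued_plan
      \<le> (\<integral>\<^sup>+ z. ennreal ((d (fst z) + (\<delta> + d (snd z))) powr p) \<partial>glued_coupling)"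
    using transport_cost_glued_plan_le_detour[OF cell_diam, where p = p] assms(1) by (simp add: d_def)
  ultimately show ?thesis
    by (simp add: algebra_simps)
qed

lemma cells_Times_UNIV:
  "disjoint_family_on (\<lambda>i. UNIV \<times> C i) {..<n}" "(\<Union>i<n. UNIV \<times> C i) = UNIV"
  "disjoint_family_on (\<lambda>i. C i \<times> UNIV) {..<n}" "(\<Union>i<n. C i \<times> UNIV) = UNIV"
proof -
  show "disjoint_family_on (\<lambda>i. UNIV \<times> C i) {..<n}" "disjoint_family_on (\<lambda>i. C i \<times> UNIV) {..<n}"
    using cells_disjoint by (auto simp: disjoint_family_on_def)
  have "(\<Union>i<n. UNIV \<times> C i) = UNIV \<times> (\<Union>i<n. C i)" "(\<Union>i<n. C i \<times> UNIV) = (\<Union>i<n. C i) \<times> UNIV"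
    by auto
  then show "(\<Union>i<n. UNIV \<times> C i) = UNIV" "(\<Union>i<n. C i \<times> UNIV) = UNIV"
    by (simp_all add: cells_cover)
qed

lemma sum_in_mass: "(\<Sum>i<n. in_mass i) = measure \<gamma>\<^sub>1 UNIV"
  unfolding in_mass_def cells_Times_UNIV(2)[symmetric] using cells_Times_UNIV(1)
  by (intro finite_measure.finite_measure_finite_Union[OF finite_\<gamma>\<^sub>1, symmetric])
    (auto simp: sets_\<gamma>\<^sub>1 borel_Times)

lemma sum_out_mass: "(\<Sum>i<n. out_mass i) = measure \<gamma>\<^sub>2 UNIV"
  unfolding out_mass_def cells_Times_UNIV(4)[symmetric] using cells_Times_UNIV(3)
  by (intro finite_measure.finite_measure_finite_Union[OF finite_\<gamma>\<^sub>2, symmetric])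
    (auto simp: sets_\<gamma>\<^sub>2 borel_Times)

lemma glued_mass_ge:
  assumes "prob_space \<kappa>" "sets \<kappa> = sets borel"
    and "\<And>B. B \<in> sets borel \<Longrightarrow> emeasure \<gamma>\<^sub>1 (UNIV \<times> B) \<le> emeasure \<kappa> B"
    and "\<And>A. A \<in> sets borel \<Longrightarrow> emeasure \<gamma>\<^sub>2 (A \<times> UNIV) \<le> emeasure \<kappa> A"
  shows "measure \<gamma>\<^sub>1 UNIV + measure \<gamma>\<^sub>2 UNIV - 1 \<le> (\<Sum>i<n. min (in_mass i) (out_mass i))"
proof -
  interpret \<kappa>: prob_space \<kappa>
    by (rule assms(1))
  have "disjoint_family_on C {..<n}" "C i \<in> sets \<kappa>" for i
    using cells_disjoint assms(2) by (auto simp: disjoint_family_on_def)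
  then have "(\<Sum>i<n. measure \<kappa> (C i)) = measure \<kappa> (\<Union>i<n. C i)"
    by (intro \<kappa>.finite_measure_finite_Union[symmetric]) auto
  also have "\<dots> = 1"
    using cells_cover \<kappa>.prob_space sets_eq_imp_space_eq[OF assms(2)] by simp
  finally have sum_\<kappa>: "(\<Sum>i<n. measure \<kappa> (C i)) = 1" .
  have "in_mass i + out_mass i - measure \<kappa> (C i) \<le> min (in_mass i) (out_mass i)" for i
  proof -
    have "emeasure \<gamma>\<^sub>1 (UNIV \<times> C i) \<le> emeasure \<kappa> (C i)" "emeasure \<gamma>\<^sub>2 (C i \<times> UNIV) \<le> emeasure \<kappa> (C i)"
      using assms(3,4) by simp_all
    then have "in_mass i \<le> measure \<kappa> (C i)" "out_mass i \<le> measure \<kappa> (C i)"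
      using finite_measure.emeasure_eq_measure[OF finite_\<gamma>\<^sub>1, of "UNIV \<times> C i"]
        finite_measure.emeasure_eq_measure[OF finite_\<gamma>\<^sub>2, of "C i \<times> UNIV"] \<kappa>.emeasure_eq_measure[of "C i"]
      by (simp_all add: in_mass_def out_mass_def)
    then show ?thesis
      by simp
  qed
  then have "(\<Sum>i<n. in_mass i + out_mass i - measure \<kappa> (C i)) \<le> (\<Sum>i<n. min (in_mass i) (out_mass i))"
    by (rule sum_mono)
  then show ?thesis
    by (simp add: sum.distrib sum_subtractf sum_in_mass sum_out_mass sum_\<kappa>)
qed

end

lemma partial_plan_glue:
  fixes \<mu> \<kappa> \<nu> :: "'a::metric_space measure"
  assumes "compact (UNIV :: 'a set)" "\<forall>x y :: 'a. dist x y \<le> 1" "p \<ge> 1" "prob_dist \<kappa>"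
    and \<gamma>\<^sub>1: "partial_plan \<mu> \<kappa> \<alpha>\<^sub>1 \<gamma>\<^sub>1" and \<gamma>\<^sub>2: "partial_plan \<kappa> \<nu> \<alpha>\<^sub>2 \<gamma>\<^sub>2"
    and "0 \<le> \<alpha>\<^sub>1" "\<alpha>\<^sub>1 \<le> 1" "0 \<le> \<alpha>\<^sub>2" "0 \<le> \<alpha>" "\<alpha> \<le> \<alpha>\<^sub>1 + \<alpha>\<^sub>2 - 1" "e > 0"
  obtains \<sigma> where "partial_plan \<mu> \<nu> \<alpha> \<sigma>" "wcost p \<sigma> \<le> wcost p \<gamma>\<^sub>1 + wcost p \<gamma>\<^sub>2 + e"
proof -
  have "e / 2 > 0"
    using assms(12) by simp
  obtain C :: "nat \<Rightarrow> 'a set" and n :: nat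
    where C: "\<And>i. C i \<in> sets borel" "disjoint_family C" "(\<Union>i<n. C i) = UNIV"
      "\<And>i x y. x \<in> C i \<Longrightarrow> y \<in> C i \<Longrightarrow> dist x y \<le> e / 2"
    using compact_metric_finite_partition[OF assms(1) \<open>e / 2 > 0\<close>] by metis
  note g\<^sub>1 = partial_planD[OF \<gamma>\<^sub>1] and g\<^sub>2 = partial_planD[OF \<gamma>\<^sub>2] and \<kappa> = prob_distD[OF assms(4)]
  interpret plan_gluing \<gamma>\<^sub>1 \<gamma>\<^sub>2 n C
    by (intro plan_gluing.intro g\<^sub>1(1,4) g\<^sub>2(1,4) C(1-3) assms(1))
  define m where "m = (\<Sum>i<n. min (in_mass i) (out_mass i))"
  have "measure \<gamma>\<^sub>1 UNIV = \<alpha>\<^sub>1" "measure \<gamma>\<^sub>2 UNIV = \<alpha>\<^sub>2"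
    using g\<^sub>1(3) g\<^sub>2(3) assms(7,9) by (simp_all add: measure_def)
  then have "\<alpha> \<le> m"
    using glued_mass_ge[OF \<kappa>(1,2) g\<^sub>1(6) g\<^sub>2(5)] assms(11) unfolding m_def by linarith
  have glued: "partial_plan \<mu> \<nu> m glued_plan"
  proof (rule partial_planI)
    show "emeasure glued_plan UNIV = ennreal m"
      by (simp add: emeasure_glued_plan m_def in_mass_def out_mass_def)
    show "emeasure glued_plan (A \<times> UNIV) \<le> emeasure \<mu> A" if "A \<in> sets borel" for A
      using emeasure_glued_plan_fst_le[OF that] g\<^sub>1(5)[OF that] by (rule order_trans)
    show "emeasure glued_plan (UNIV \<times> B) \<le> emeasure \<nu> B" if "B \<in> sets borel" for B
      using emeasure_glued_plan_snd_le[OF that] g\<^sub>2(6)[OF that] by (rule order_trans)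
  qed (rule sets_glued_plan)
  have glued_cost: "wcost p glued_plan \<le> wcost p \<gamma>\<^sub>1 + wcost p \<gamma>\<^sub>2 + e"
  proof (rule wcost_le)
    show "transport_cost p glued_plan \<le> ennreal ((wcost p \<gamma>\<^sub>1 + wcost p \<gamma>\<^sub>2 + e) powr p)"
      using transport_cost_glued_plan[OF assms(3) _ C(4) assms(2),
          where c\<^sub>1 = "wcost p \<gamma>\<^sub>1" and c\<^sub>2 = "wcost p \<gamma>\<^sub>2"]
        transport_cost_eq_wcost_powr[OF \<gamma>\<^sub>1 assms(2)] transport_cost_eq_wcost_powr[OF \<gamma>\<^sub>2 assms(2)]
        g\<^sub>1(2,3) assms(3,8,12)
      by (simp add: wcost_nonneg)
  qed (use assms(3,12) in \<open>simp_all add: wcost_nonneg\<close>)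
  obtain \<sigma> where "partial_plan \<mu> \<nu> \<alpha> \<sigma>" "wcost p \<sigma> \<le> wcost p glued_plan"
    using partial_plan_reduce_mass[OF glued assms(10) \<open>\<alpha> \<le> m\<close> assms(2), of p] assms(3) by auto
  then show ?thesis
    using glued_cost that by auto
qed

lemma partial_W_triangle:
  fixes \<mu> \<kappa> \<nu> :: "'a::metric_space measure"
  assumes "compact (UNIV :: 'a set)" "\<forall>x y :: 'a. dist x y \<le> 1" "p \<ge> 1"
    and "prob_dist \<mu>" "prob_dist \<kappa>" "prob_dist \<nu>"
    and "0 \<le> \<alpha>\<^sub>1" "\<alpha>\<^sub>1 \<le> 1" "0 \<le> \<alpha>\<^sub>2" "\<alpha>\<^sub>2 \<le> 1" "0 \<le> \<alpha>" "\<alpha> \<le> \<alpha>\<^sub>1 + \<alpha>\<^sub>2 - 1"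
  shows "partial_W p \<alpha> \<mu> \<nu> \<le> partial_W p \<alpha>\<^sub>1 \<mu> \<kappa> + partial_W p \<alpha>\<^sub>2 \<kappa> \<nu>"
proof (rule field_le_epsilon)
  fix t :: real
  assume "0 < t"
  then have "t / 3 > 0"
    by simp
  obtain \<gamma>\<^sub>1 where \<gamma>\<^sub>1: "partial_plan \<mu> \<kappa> \<alpha>\<^sub>1 \<gamma>\<^sub>1" "wcost p \<gamma>\<^sub>1 < partial_W p \<alpha>\<^sub>1 \<mu> \<kappa> + t / 3"
    using partial_W_approx[OF ex_partial_plan[OF assms(1,4,5,7,8)] \<open>t / 3 > 0\<close>] by blast
  obtain \<gamma>\<^sub>2 where \<gamma>\<^sub>2: "partial_plan \<kappa> \<nu> \<alpha>\<^sub>2 \<gamma>\<^sub>2" "wcost p \<gamma>\<^sub>2 < partial_W p \<alpha>\<^sub>2 \<kappa> \<nu> + t / 3"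
    using partial_W_approx[OF ex_partial_plan[OF assms(1,5,6,9,10)] \<open>t / 3 > 0\<close>] by blast
  obtain \<sigma> where "partial_plan \<mu> \<nu> \<alpha> \<sigma>" "wcost p \<sigma> \<le> wcost p \<gamma>\<^sub>1 + wcost p \<gamma>\<^sub>2 + t / 3"
    using partial_plan_glue[OF assms(1-3,5) \<gamma>\<^sub>1(1) \<gamma>\<^sub>2(1) assms(7,8,9,11,12) \<open>t / 3 > 0\<close>] by blast
  then show "partial_W p \<alpha> \<mu> \<nu> \<le> partial_W p \<alpha>\<^sub>1 \<mu> \<kappa> + partial_W p \<alpha>\<^sub>2 \<kappa> \<nu> + t"
    using partial_W_le_wcost[of \<mu> \<nu> \<alpha> \<sigma> p] \<gamma>\<^sub>1(2) \<gamma>\<^sub>2(2) by linarith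
qed

section \<open>The RPW distance\<close>

lemma RPW_le:
  assumes "0 \<le> \<epsilon>" "\<epsilon> \<le> 1" "partial_W p (1 - \<epsilon>) \<mu> \<nu> \<le> k * \<epsilon>"
  shows "RPW p k \<mu> \<nu> \<le> \<epsilon>"
  unfolding RPW_def using assms by (intro cInf_lower) (auto intro: bdd_belowI[of _ 0])

lemma RPW_le_1: "k \<ge> 0 \<Longrightarrow> RPW p k \<mu> \<nu> \<le> 1"
  using partial_W_zero_mass[of p \<mu> \<nu>] by (intro RPW_le) auto

lemma RPW_nonneg: "k \<ge> 0 \<Longrightarrow> 0 \<le> RPW p k \<mu> \<nu>"
  unfolding RPW_def using partial_W_zero_mass[of p \<mu> \<nu>] by (intro cInf_greatest) auto

lemma RPW_lessE:
  assumes "k \<ge> 0" "RPW p k \<mu> \<nu> < t"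
  obtains \<epsilon> where "0 \<le> \<epsilon>" "\<epsilon> \<le> 1" "\<epsilon> < t" "partial_W p (1 - \<epsilon>) \<mu> \<nu> \<le> k * \<epsilon>"
proof -
  let ?S = "{\<epsilon> \<in> {0..1}. partial_W p (1 - \<epsilon>) \<mu> \<nu> \<le> k * \<epsilon>}"
  have "1 \<in> ?S"
    using partial_W_zero_mass[of p \<mu> \<nu>] assms(1) by simp
  then obtain \<epsilon> where "\<epsilon> \<in> ?S" "\<epsilon> < t"
    using cInf_lessD[of ?S t] assms(2) unfolding RPW_def by blast
  then show ?thesis
    using that by auto
qed

lemma RPW_self:
  fixes \<mu> :: "'a::metric_space measure"
  assumes "k \<ge> 0" "prob_dist \<mu>"
  shows "RPW p k \<mu> \<mu> = 0"
  using RPW_le[of 0 p \<mu> \<mu> k] partial_W_self[OF assms(2), of p] RPW_nonneg[OF assms(1), of p \<mu> \<mu>]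
  by simp

lemma RPW_commute:
  fixes \<mu> \<nu> :: "'a::metric_space measure"
  shows "RPW p k \<mu> \<nu> = RPW p k \<nu> \<mu>"
  unfolding RPW_def by (simp add: partial_W_commute)

lemma RPW_triangle:
  fixes \<mu> \<kappa> \<nu> :: "'a::metric_space measure"
  assumes "compact (UNIV :: 'a set)" "\<forall>x y :: 'a. dist x y \<le> 1" "p \<ge> 1" "k \<ge> 0"
    and "prob_dist \<mu>" "prob_dist \<kappa>" "prob_dist \<nu>"
  shows "RPW p k \<mu> \<nu> \<le> RPW p k \<mu> \<kappa> + RPW p k \<kappa> \<nu>"
proof (rule field_le_epsilon)
  fix t :: real
  assume "0 < t"
  show "RPW p k \<mu> \<nu> \<le> RPW p k \<mu> \<kappa> + RPW p k \<kappa> \<nu> + t"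
  proof (cases "RPW p k \<mu> \<kappa> + RPW p k \<kappa> \<nu> + t \<le> 1")
    case True
    obtain \<epsilon>\<^sub>1 where \<epsilon>\<^sub>1: "0 \<le> \<epsilon>\<^sub>1" "\<epsilon>\<^sub>1 \<le> 1" "\<epsilon>\<^sub>1 < RPW p k \<mu> \<kappa> + t / 2"
        "partial_W p (1 - \<epsilon>\<^sub>1) \<mu> \<kappa> \<le> k * \<epsilon>\<^sub>1"
      using RPW_lessE[OF assms(4), of p \<mu> \<kappa> "RPW p k \<mu> \<kappa> + t / 2"] \<open>0 < t\<close> by auto
    obtain \<epsilon>\<^sub>2 where \<epsilon>\<^sub>2: "0 \<le> \<epsilon>\<^sub>2" "\<epsilon>\<^sub>2 \<le> 1" "\<epsilon>\<^sub>2 < RPW p k \<kappa> \<nu> + t / 2"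
        "partial_W p (1 - \<epsilon>\<^sub>2) \<kappa> \<nu> \<le> k * \<epsilon>\<^sub>2"
      using RPW_lessE[OF assms(4), of p \<kappa> \<nu> "RPW p k \<kappa> \<nu> + t / 2"] \<open>0 < t\<close> by auto
    define \<epsilon> where "\<epsilon> = RPW p k \<mu> \<kappa> + RPW p k \<kappa> \<nu> + t"
    have "0 \<le> \<epsilon>" "\<epsilon>\<^sub>1 + \<epsilon>\<^sub>2 \<le> \<epsilon>"
      using \<epsilon>\<^sub>1(1,3) \<epsilon>\<^sub>2(1,3) \<open>0 < t\<close> by (auto simp: \<epsilon>_def)
    have "partial_W p (1 - \<epsilon>) \<mu> \<nu> \<le> partial_W p (1 - \<epsilon>\<^sub>1) \<mu> \<kappa> + partial_W p (1 - \<epsilon>\<^sub>2) \<kappa> \<nu>"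
      using \<epsilon>\<^sub>1 \<epsilon>\<^sub>2 True \<open>\<epsilon>\<^sub>1 + \<epsilon>\<^sub>2 \<le> \<epsilon>\<close> \<open>0 \<le> \<epsilon>\<close>
      by (intro partial_W_triangle[OF assms(1-3,5-7)]) (auto simp: \<epsilon>_def)
    also have "\<dots> \<le> k * \<epsilon>"
      using \<epsilon>\<^sub>1(4) \<epsilon>\<^sub>2(4) mult_left_mono[OF \<open>\<epsilon>\<^sub>1 + \<epsilon>\<^sub>2 \<le> \<epsilon>\<close> assms(4)] by (simp add: distrib_left)
    finally show ?thesis
      using RPW_le[OF \<open>0 \<le> \<epsilon>\<close>] True by (simp add: \<epsilon>_def)
  next
    case False
    then show ?thesis
      using RPW_le_1[OF assms(4), of p \<mu> \<nu>] by simp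
  qed
qed

lemma partial_plan_measure_far_le:
  fixes \<gamma> :: "('a::metric_space \<times> 'a) measure"
  assumes \<gamma>: "partial_plan \<mu> \<nu> \<alpha> \<gamma>" and "\<forall>x y :: 'a. dist x y \<le> 1" "p > 0" "r > 0"
  shows "measure \<gamma> {z. r \<le> dist (fst z) (snd z)} \<le> (wcost p \<gamma> / r) powr p"
proof -
  let ?far = "{z::'a \<times> 'a. r \<le> dist (fst z) (snd z)}"
  interpret \<gamma>: finite_measure \<gamma>
    by (rule partial_planD(4)[OF \<gamma>])
  have "closed ?far"
    by (intro closed_Collect_le continuous_intros)
  then have "ennreal (r powr p * measure \<gamma> ?far) = (\<integral>\<^sup>+ z. ennreal (r powr p) * indicator ?far z \<partial>\<gamma>)"
    using partial_planD(1)[OF \<gamma>] by (simp add: nn_integral_cmult_indicator \<gamma>.emeasure_eq_measure ennreal_mult)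
  also have "\<dots> \<le> transport_cost p \<gamma>"
    unfolding transport_cost_def using assms(3,4)
    by (intro nn_integral_mono) (auto simp: indicator_def intro!: powr_mono2)
  also have "\<dots> = ennreal (wcost p \<gamma> powr p)"
    by (rule transport_cost_eq_wcost_powr[OF \<gamma> assms(2,3)])
  finally have "r powr p * measure \<gamma> ?far \<le> wcost p \<gamma> powr p"
    by (simp add: ennreal_le_iff wcost_nonneg)
  then show ?thesis
    using assms(4) by (simp add: powr_divide wcost_nonneg field_simps)
qed

lemma partial_plan_measure_fst_ge:
  fixes \<mu> :: "'a::metric_space measure"
  assumes \<gamma>: "partial_plan \<mu> \<nu> (1 - \<epsilon>) \<gamma>" and "prob_dist \<mu>" "\<epsilon> \<le> 1" "A \<in> sets borel"
  shows "measure \<mu> A - \<epsilon> \<le> measure \<gamma> (A \<times> UNIV)"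
proof -
  note g = partial_planD[OF \<gamma>] and \<mu> = prob_distD[OF assms(2)]
  interpret \<gamma>: finite_measure \<gamma>
    by (rule g(4))
  interpret \<mu>: prob_space \<mu>
    by (rule \<mu>(1))
  have sets: "A \<times> UNIV \<in> sets \<gamma>" "(- A) \<times> UNIV \<in> sets \<gamma>"
    using assms(4) by (simp_all add: g(1) borel_Times borel_comp)
  have disj: "A \<times> UNIV \<inter> (- A) \<times> UNIV = {}" and cover: "A \<times> UNIV \<union> (- A) \<times> UNIV = UNIV"
    by auto
  have "measure \<gamma> (A \<times> UNIV) + measure \<gamma> ((- A) \<times> UNIV) = measure \<gamma> UNIV"
    using \<gamma>.finite_measure_Union[OF sets disj] unfolding cover by (rule sym)
  also have "\<dots> = 1 - \<epsilon>"
    using g(3) assms(3) by (simp add: measure_def)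
  finally have "measure \<gamma> (A \<times> UNIV) + measure \<gamma> ((- A) \<times> UNIV) = 1 - \<epsilon>" .
  moreover have "measure \<gamma> ((- A) \<times> UNIV) \<le> measure \<mu> (- A)"
    using g(5)[of "- A"] assms(4) by (simp add: \<gamma>.emeasure_eq_measure \<mu>.emeasure_eq_measure borel_comp)
  moreover have "measure \<mu> (- A) = 1 - measure \<mu> A"
    using \<mu>.prob_compl[of A] assms(4) \<mu>(2,3) by (simp add: Compl_eq_Diff_UNIV)
  ultimately show ?thesis
    by linarith
qed

lemma Times_UNIV_subset_thickening:
  fixes F :: "'a::metric_space set"
  shows "F \<times> UNIV \<subseteq> UNIV \<times> {y. infdist y F < r} \<union> {z. r \<le> dist (fst z) (snd z)}"
proof
  fix z
  assume "z \<in> F \<times> (UNIV :: 'a set)"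
  then obtain x y where z: "z = (x, y)" "x \<in> F"
    by auto
  show "z \<in> UNIV \<times> {y. infdist y F < r} \<union> {z. r \<le> dist (fst z) (snd z)}"
  proof (cases "r \<le> dist x y")
    case False
    then have "infdist y F < r"
      using infdist_le[OF z(2), of y] by (simp add: dist_commute)
    then show ?thesis
      using z by simp
  qed (use z in simp)
qed

lemma measure_le_thickening:
  fixes \<mu> \<nu> :: "'a::metric_space measure"
  assumes "\<forall>x y :: 'a. dist x y \<le> 1" "p > 0" "prob_dist \<mu>" "prob_dist \<nu>"
    and \<gamma>: "partial_plan \<mu> \<nu> (1 - \<epsilon>) \<gamma>" and "\<epsilon> \<le> 1" "closed F" "r > 0"
  shows "measure \<mu> F \<le> measure \<nu> {x. infdist x F < r} + (wcost p \<gamma> / r) powr p + \<epsilon>"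
proof -
  note g = partial_planD[OF \<gamma>]
  interpret \<gamma>: finite_measure \<gamma>
    by (rule g(4))
  interpret \<nu>: prob_space \<nu>
    by (rule prob_distD(1)[OF assms(4)])
  define F\<^sub>r where "F\<^sub>r = {x. infdist x F < r}"
  define far where "far = {z::'a \<times> 'a. r \<le> dist (fst z) (snd z)}"
  have "open F\<^sub>r"
    unfolding F\<^sub>r_def by (intro open_Collect_less continuous_intros)
  have "closed far"
    unfolding far_def by (intro closed_Collect_le continuous_intros)
  have sets: "UNIV \<times> F\<^sub>r \<in> sets \<gamma>" "far \<in> sets \<gamma>"
    using \<open>open F\<^sub>r\<close> \<open>closed far\<close> by (auto simp: g(1) borel_Times)
  have "measure \<mu> F - \<epsilon> \<le> measure \<gamma> (F \<times> UNIV)"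
    using assms(7) by (intro partial_plan_measure_fst_ge[OF \<gamma> assms(3,6)]) simp
  also have "\<dots> \<le> measure \<gamma> (UNIV \<times> F\<^sub>r \<union> far)"
    using Times_UNIV_subset_thickening[of F r] sets unfolding F\<^sub>r_def far_def
    by (intro \<gamma>.finite_measure_mono) auto
  also have "\<dots> \<le> measure \<gamma> (UNIV \<times> F\<^sub>r) + measure \<gamma> far"
    using sets by (rule measure_Un_le)
  also have "measure \<gamma> (UNIV \<times> F\<^sub>r) \<le> measure \<nu> F\<^sub>r"
    using g(6)[of F\<^sub>r] \<open>open F\<^sub>r\<close> by (simp add: \<gamma>.emeasure_eq_measure \<nu>.emeasure_eq_measure)
  also have "measure \<gamma> far \<le> (wcost p \<gamma> / r) powr p"
    unfolding far_def by (rule partial_plan_measure_far_le[OF \<gamma> assms(1,2,8)])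
  finally show ?thesis
    by (simp add: F\<^sub>r_def)
qed

lemma RPW_eq_0_imp_cheap_plan:
  fixes \<mu> \<nu> :: "'a::metric_space measure"
  assumes "compact (UNIV :: 'a set)" "k \<ge> 0" "prob_dist \<mu>" "prob_dist \<nu>"
    and "RPW p k \<mu> \<nu> = 0" "\<delta> > 0"
  obtains \<epsilon> \<gamma> where "0 \<le> \<epsilon>" "\<epsilon> \<le> \<delta>" "\<epsilon> \<le> 1" "partial_plan \<mu> \<nu> (1 - \<epsilon>) \<gamma>" "wcost p \<gamma> \<le> \<delta>"
proof -
  define t where "t = \<delta> / (2 * (k + 1))"
  have "t > 0"
    using assms(2,6) by (simp add: t_def)
  then obtain \<epsilon> where \<epsilon>: "0 \<le> \<epsilon>" "\<epsilon> \<le> 1" "\<epsilon> < t" "partial_W p (1 - \<epsilon>) \<mu> \<nu> \<le> k * \<epsilon>"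
    using RPW_lessE[OF assms(2), of p \<mu> \<nu> t] assms(5) by auto
  have "k * t \<le> \<delta> / 2" "t \<le> \<delta> / 2"
    using assms(2,6) by (auto simp: t_def field_simps)
  then have bounds: "k * \<epsilon> \<le> \<delta> / 2" "\<epsilon> \<le> \<delta>"
    using mult_left_mono[of \<epsilon> t k] \<epsilon>(3) assms(2,6) by auto
  have "0 \<le> 1 - \<epsilon>" "1 - \<epsilon> \<le> 1" "\<delta> / 2 > 0"
    using \<epsilon>(1,2) assms(6) by simp_all
  then obtain \<gamma> where \<gamma>: "partial_plan \<mu> \<nu> (1 - \<epsilon>) \<gamma>" "wcost p \<gamma> < partial_W p (1 - \<epsilon>) \<mu> \<nu> + \<delta> / 2"
    by (rule partial_W_approx[OF ex_partial_plan[OF assms(1,3,4)]])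
  then have "wcost p \<gamma> \<le> \<delta>"
    using \<epsilon>(4) bounds(1) by linarith
  then show ?thesis
    using that \<epsilon>(1,2) bounds(2) \<gamma>(1) by blast
qed

lemma RPW_eq_0_imp_le_thickening:
  fixes \<mu> \<nu> :: "'a::metric_space measure"
  assumes "compact (UNIV :: 'a set)" "\<forall>x y :: 'a. dist x y \<le> 1" "p \<ge> 1" "k \<ge> 0"
    and "prob_dist \<mu>" "prob_dist \<nu>" "RPW p k \<mu> \<nu> = 0" "closed F" "r > 0"
  shows "measure \<mu> F \<le> measure \<nu> {x. infdist x F < r}"
proof (rule field_le_epsilon)
  fix t :: real
  assume "t > 0"
  define m where "m = min 1 (t / 2)"
  define \<delta> where "\<delta> = min (t / 2) (m * r)"
  have "m > 0" "m \<le> 1" "m \<le> t / 2"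
    using \<open>t > 0\<close> by (simp_all add: m_def)
  then have "\<delta> > 0"
    using \<open>t > 0\<close> assms(9) by (simp add: \<delta>_def)
  then obtain \<epsilon> \<gamma> where \<epsilon>: "0 \<le> \<epsilon>" "\<epsilon> \<le> \<delta>" "\<epsilon> \<le> 1" and \<gamma>: "partial_plan \<mu> \<nu> (1 - \<epsilon>) \<gamma>" "wcost p \<gamma> \<le> \<delta>"
    by (rule RPW_eq_0_imp_cheap_plan[OF assms(1,4-7)])
  define w where "w = wcost p \<gamma> / r"
  have "wcost p \<gamma> \<le> m * r"
    using \<gamma>(2) by (simp add: \<delta>_def)
  then have "0 \<le> w" "w \<le> m"
    using assms(9) by (simp_all add: w_def wcost_nonneg pos_divide_le_eq)
  then have "w powr p \<le> t / 2"
    using assms(3) powr_le_one_le[of w p] \<open>m \<le> 1\<close> \<open>m \<le> t / 2\<close> by (cases "w = 0") auto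
  moreover have "\<epsilon> \<le> t / 2"
    using \<epsilon>(2) by (simp add: \<delta>_def)
  moreover have "measure \<mu> F \<le> measure \<nu> {x. infdist x F < r} + w powr p + \<epsilon>"
    using measure_le_thickening[OF assms(2) _ assms(5,6) \<gamma>(1) \<epsilon>(3) assms(8,9)] assms(3)
    by (simp add: w_def)
  ultimately show "measure \<mu> F \<le> measure \<nu> {x. infdist x F < r} + t"
    by linarith
qed

lemma closed_eq_Inter_thickenings:
  fixes F :: "'a::metric_space set"
  assumes "closed F" "F \<noteq> {}"
  shows "(\<Inter>n. {x. infdist x F < 1 / Suc n}) = F"
proof (intro equalityI subsetI)
  fix x
  assume "x \<in> (\<Inter>n. {x. infdist x F < 1 / Suc n})"
  then have below: "infdist x F < 1 / Suc n" for n
    by blast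
  have "\<not> infdist x F > 0"
  proof
    assume "infdist x F > 0"
    then obtain n where "1 / real (Suc n) < infdist x F"
      by (rule nat_approx_posE)
    then show False
      using below[of n] by simp
  qed
  then have "infdist x F = 0"
    using infdist_nonneg[of x F] by simp
  then show "x \<in> F"
    using in_closed_iff_infdist_zero[OF assms] by simp
qed (use in_closed_iff_infdist_zero[OF assms] in auto)

lemma RPW_eq_0_imp_emeasure_closed_le:
  fixes \<mu> \<nu> :: "'a::metric_space measure"
  assumes "compact (UNIV :: 'a set)" "\<forall>x y :: 'a. dist x y \<le> 1" "p \<ge> 1" "k \<ge> 0"
    and "prob_dist \<mu>" "prob_dist \<nu>" "RPW p k \<mu> \<nu> = 0" "closed F"
  shows "emeasure \<mu> F \<le> emeasure \<nu> F"
proof (cases "F = {}")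
  case False
  interpret \<mu>: prob_space \<mu>
    using assms(5) by (rule prob_distD)
  interpret \<nu>: prob_space \<nu>
    using assms(6) by (rule prob_distD)
  define A where "A n = {x. infdist x F < 1 / Suc n}" for n
  have "open (A n)" for n
    unfolding A_def by (intro open_Collect_less continuous_intros)
  then have sets: "range A \<subseteq> sets \<nu>"
    using prob_distD(2)[OF assms(6)] by auto
  have dec: "decseq A"
  proof (rule decseq_SucI)
    fix n
    have "1 / real (Suc (Suc n)) \<le> 1 / real (Suc n)"
      by (simp add: frac_le)
    then show "A (Suc n) \<subseteq> A n"
      by (auto simp: A_def)
  qed
  have "(\<Inter>n. A n) = F"
    unfolding A_def by (rule closed_eq_Inter_thickenings[OF assms(8) False])
  have "emeasure \<mu> F \<le> emeasure \<nu> (A n)" for n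
  proof -
    have "measure \<mu> F \<le> measure \<nu> (A n)"
      unfolding A_def by (rule RPW_eq_0_imp_le_thickening[OF assms]) simp
    then show ?thesis
      by (simp add: \<mu>.emeasure_eq_measure \<nu>.emeasure_eq_measure)
  qed
  then have "emeasure \<mu> F \<le> (INF n. emeasure \<nu> (A n))"
    by (rule INF_greatest)
  also have "\<dots> = emeasure \<nu> (\<Inter>n. A n)"
    by (rule INF_emeasure_decseq[OF sets dec]) simp
  finally show ?thesis
    using \<open>(\<Inter>n. A n) = F\<close> by simp
qed simp

lemma RPW_eq_0_imp_eq:
  fixes \<mu> \<nu> :: "'a::metric_space measure"
  assumes "compact (UNIV :: 'a set)" "\<forall>x y :: 'a. dist x y \<le> 1" "p \<ge> 1" "k \<ge> 0"
    and "prob_dist \<mu>" "prob_dist \<nu>" "RPW p k \<mu> \<nu> = 0"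
  shows "\<mu> = \<nu>"
proof (rule measure_eqI_generator_eq[where E = "Collect closed" and \<Omega> = UNIV and A = "\<lambda>_. UNIV"])
  have "RPW p k \<nu> \<mu> = 0"
    using assms(7) RPW_commute by metis
  then show "emeasure \<mu> X = emeasure \<nu> X" if "X \<in> Collect closed" for X
    using that RPW_eq_0_imp_emeasure_closed_le[OF assms(1-4)] assms(5-7)
    by (metis antisym mem_Collect_eq)
  have "sets borel = sigma_sets (UNIV :: 'a set) (Collect closed)"
    by (simp add: borel_eq_closed)
  then show "sets \<mu> = sigma_sets UNIV (Collect closed)" "sets \<nu> = sigma_sets UNIV (Collect closed)"
    using prob_distD(2)[OF assms(5)] prob_distD(2)[OF assms(6)] by simp_all
  show "emeasure \<mu> UNIV \<noteq> \<infinity>"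
    using prob_distD(4)[OF assms(5)] by simp
qed (auto simp: Int_stable_def)

theorem theorem2p1:
  fixes p k :: real
  assumes "p \<ge> 1" and "k \<ge> 0"
    and "compact (UNIV :: 'a::metric_space set)"
    and "\<forall>x y :: 'a. dist x y \<le> 1"
  shows "\<forall>\<mu> \<nu> \<kappa> :: 'a measure. prob_dist \<mu> \<and> prob_dist \<nu> \<and> prob_dist \<kappa> \<longrightarrow>
           RPW p k \<mu> \<mu> = 0 \<and>
           (\<mu> \<noteq> \<nu> \<longrightarrow> RPW p k \<mu> \<nu> > 0) \<and>
           RPW p k \<mu> \<nu> = RPW p k \<nu> \<mu> \<and>
           RPW p k \<mu> \<nu> \<le> RPW p k \<mu> \<kappa> + RPW p k \<kappa> \<nu>"
proof (intro allI impI conjI)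
  fix \<mu> \<nu> \<kappa> :: "'a measure"
  assume "prob_dist \<mu> \<and> prob_dist \<nu> \<and> prob_dist \<kappa>"
  then have \<mu>: "prob_dist \<mu>" and \<nu>: "prob_dist \<nu>" and \<kappa>: "prob_dist \<kappa>"
    by auto
  show "RPW p k \<mu> \<mu> = 0"
    by (rule RPW_self[OF assms(2) \<mu>])
  show "RPW p k \<mu> \<nu> = RPW p k \<nu> \<mu>"
    by (rule RPW_commute)
  show "RPW p k \<mu> \<nu> \<le> RPW p k \<mu> \<kappa> + RPW p k \<kappa> \<nu>"
    by (rule RPW_triangle[OF assms(3,4,1,2) \<mu> \<kappa> \<nu>])
  show "RPW p k \<mu> \<nu> > 0" if "\<mu> \<noteq> \<nu>"
    using RPW_nonneg[OF assms(2), of p \<mu> \<nu>] RPW_eq_0_imp_eq[OF assms(3,4,1,2) \<mu> \<nu>] that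
    by fastforce
qed

end
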